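(* Let $p>1$, $p'=\frac{p}{p-1}$, $\alpha\in[0,1]$, and let $\psi_R,\psi_R^*,P(R)$ be as in the context. Let $\delta>0$, $C_0>0$, $R_1>0$, $\theta\geq0$, $T>R_1$, and let $0\leq w\in L^1_{\rm loc}([0,T);L^1(\mathcal{C}_\Sigma))$. Assume that for every $R\in[R_1,T)$, \[ \delta+\iint_{P(R)}w(x,t)\psi_R(x,t)\,dx\,dt\leq C_0R^{-\frac{\theta}{p'}}\left(\iint_{P(R)}w(x,t)\psi_R^*(x,t)\,dx\,dt\right)^{\frac1p}. \] Then \[ T\leq \begin{cases} \left(R_1^{(p-1)\theta}+(\log2)C_0^p\theta\delta^{-(p-1)}\right)^{\frac{1}{(p-1)\theta}}, & \text{if }\theta>0,\\[5pt] \exp\left(\log R_1+(\log2)(p-1)^{-1}C_0^p\delta^{-(p-1)}\right), & \text{if }\theta=0. \end{cases} \]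
   Context: $\mathcal{C}_\Sigma\subset\mathbb{R}^N$ is an open set (a cone $\mathrm{int}\{\rho\omega:\rho\ge0,\omega\in\Sigma\}$ with $\Sigma\subset S^{N-1}$ connected open with smooth boundary if $N\ge2$; $(0,\infty)$ or $\mathbb{R}$ if $N=1$). $\langle x\rangle=(1+|x|^2)^{1/2}$. Fix $\eta\in C^\infty([0,\infty))$ with $\eta=1$ on $[0,1/2]$, $\eta$ decreasing on $(1/2,1)$, $\eta=0$ on $[1,\infty)$; set $\eta^*(s)=0$ for $s\in[0,1/2)$ and $\eta^*(s)=\eta(s)$ for $s\geq1/2$. For $R>0$ let $s_R(x,t)=R^{-1}(\langle x\rangle^{2-\alpha}+t)$, $\psi_R(x,t)=[\eta(s_R(x,t))]^{2p'}$, $\psi_R^*(x,t)=[\eta^*(s_R(x,t))]^{2p'}$ for $(x,t)\in\mathcal{C}_\Sigma\times[0,\infty)$, and $P(R)=\{(x,t)\in\mathcal{C}_\Sigma\times[0,\infty):\langle x\rangle^{2-\alpha}+t\leq R\}$. *)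

theory Defs
  imports "HOL-Analysis.Analysis"
begin

text \<open>Cone domain C_Sigma in R^N (N = CARD('n)).
  For N = 1: (0,\<infinity>) or R.  (Smoothness of the boundary of Sigma is not imposed.)\<close>
definition cone_domain :: "(real^'n) set \<Rightarrow> bool" where
  "cone_domain C \<longleftrightarrow>
     (if CARD('n) \<ge> 2 then
        (\<exists>\<Sigma>. \<Sigma> \<subseteq> sphere 0 1 \<and> openin (top_of_set (sphere 0 1)) \<Sigma> \<and> connected \<Sigma> \<and> \<Sigma> \<noteq> {} \<and>
              C = interior {\<rho> *\<^sub>R \<omega> | \<rho> \<omega>. \<rho> \<ge> 0 \<and> \<omega> \<in> \<Sigma>})
      else (C = {x. \<forall>i. x $ i > 0} \<or> C = UNIV))"

definition jbr :: "real^'n \<Rightarrow> real" where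
  "jbr x = sqrt (1 + (norm x)\<^sup>2)"

definition cutoff_profile :: "(real \<Rightarrow> real) \<Rightarrow> bool" where
  "cutoff_profile \<eta> \<longleftrightarrow>
     (\<exists>D :: nat \<Rightarrow> real \<Rightarrow> real. D 0 = \<eta> \<and>
        (\<forall>k x. x \<ge> 0 \<longrightarrow> (D k has_real_derivative D (Suc k) x) (at x within {0..}))) \<and>
     (\<forall>s\<in>{0..1/2}. \<eta> s = 1) \<and>
     (\<forall>s1 s2. 1/2 < s1 \<and> s1 < s2 \<and> s2 < 1 \<longrightarrow> \<eta> s2 < \<eta> s1) \<and>
     (\<forall>s\<ge>1. \<eta> s = 0)"

definition eta_star :: "(real \<Rightarrow> real) \<Rightarrow> real \<Rightarrow> real" where
  "eta_star \<eta> s = (if s < 1/2 then 0 else \<eta> s)"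

definition conj_exp :: "real \<Rightarrow> real" where
  "conj_exp p = p / (p - 1)"

definition sR :: "real \<Rightarrow> real \<Rightarrow> real^'n \<Rightarrow> real \<Rightarrow> real" where
  "sR \<alpha> R x t = (jbr x powr (2 - \<alpha>) + t) / R"

definition psiR :: "(real \<Rightarrow> real) \<Rightarrow> real \<Rightarrow> real \<Rightarrow> real \<Rightarrow> real^'n \<Rightarrow> real \<Rightarrow> real" where
  "psiR \<eta> p \<alpha> R x t = \<eta> (sR \<alpha> R x t) powr (2 * conj_exp p)"

definition psiR_star :: "(real \<Rightarrow> real) \<Rightarrow> real \<Rightarrow> real \<Rightarrow> real \<Rightarrow> real^'n \<Rightarrow> real \<Rightarrow> real" where
  "psiR_star \<eta> p \<alpha> R x t = eta_star \<eta> (sR \<alpha> R x t) powr (2 * conj_exp p)"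

definition PR :: "(real^'n) set \<Rightarrow> real \<Rightarrow> real \<Rightarrow> ((real^'n) \<times> real) set" where
  "PR C \<alpha> R = {(x, t). x \<in> C \<and> t \<ge> 0 \<and> jbr x powr (2 - \<alpha>) + t \<le> R}"

end

theory Submission
  imports Defs
begin

text \<open>Write G(r) and F(r) for the integrals of w against psi*_r and psi_r over P(r).
  Since eta*(s/r) vanishes unless s <= r <= 2s, and eta is nonincreasing, Tonelli's theorem and
  the integral of dr/r over [s, 2s] being log 2 give Y(R) := int_R1^R G(r)/r dr <= (log 2) F(R).
  Raising the hypothesis to the power p turns this into the integral inequality
  Y'(R) >= C0^(-p) R^(theta(p-1)-1) (delta + Y(R)/log 2)^p, and separating variables in it
  bounds every R < T.\<close>

lemma cutoff_profile_continuous: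
  assumes "cutoff_profile \<eta>"
  shows "continuous_on {0..} \<eta>"
proof -
  obtain D where D_0: "D 0 = \<eta>" and D_deriv: "\<forall>k x. x \<ge> 0 \<longrightarrow> (D k has_real_derivative D (Suc k) x) (at x within {0..})"
    using assms unfolding cutoff_profile_def by blast
  have "\<forall>x\<in>{0..}. continuous (at x within {0..}) \<eta>"
    using D_deriv D_0 by (metis DERIV_continuous atLeast_iff)
  then show ?thesis by (simp add: continuous_on_eq_continuous_within)
qed

lemma cutoff_profile_bounds:
  assumes \<eta>: "cutoff_profile \<eta>" and u: "0 \<le> u"
  shows "0 \<le> \<eta> u \<and> \<eta> u \<le> 1"
proof -
  have one: "\<forall>s\<in>{0..1/2}. \<eta> s = 1"
    and decreasing: "\<forall>s1 s2. 1/2 < s1 \<and> s1 < s2 \<and> s2 < 1 \<longrightarrow> \<eta> s2 < \<eta> s1"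
    and vanish: "\<forall>s\<ge>1. \<eta> s = 0"
    using \<eta> unfolding cutoff_profile_def by blast+
  consider "u \<le> 1/2" | "1 \<le> u" | "1/2 < u" "u < 1" by linarith
  then show ?thesis
  proof cases
    case 3
    have cont: "continuous_on {0..} \<eta>" by (rule cutoff_profile_continuous[OF \<eta>])
    have lim_half: "(\<eta> \<longlongrightarrow> \<eta> (1/2)) (at_right (1/2))"
    proof -
      have "(\<eta> \<longlongrightarrow> \<eta> (1/2)) (at (1/2) within {0..})"
        using cont by (simp add: continuous_on_def)
      then show ?thesis by (rule tendsto_mono[rotated]) (auto intro: at_le)
    qed
    have lim_one: "(\<eta> \<longlongrightarrow> \<eta> 1) (at_left 1)"
    proof -
      have "(\<eta> \<longlongrightarrow> \<eta> 1) (at 1 within {0..})"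
        using cont by (simp add: continuous_on_def)
      then have "(\<eta> \<longlongrightarrow> \<eta> 1) (at 1 within {0..1})"
        by (rule tendsto_mono[rotated]) (auto intro: at_le)
      then show ?thesis by (simp add: at_within_Icc_at_left)
    qed
    have "eventually (\<lambda>v. \<eta> u \<le> \<eta> v) (at_right (1/2))"
      unfolding eventually_at_right_field using 3
      by (intro exI[of _ u]) (use decreasing in \<open>auto intro: less_imp_le\<close>)
    then have "\<eta> u \<le> \<eta> (1/2)" by (rule tendsto_lowerbound[OF lim_half]) simp
    moreover have "eventually (\<lambda>v. \<eta> v \<le> \<eta> u) (at_left 1)"
      unfolding eventually_at_left_field using 3
      by (intro exI[of _ u]) (use decreasing in \<open>auto intro: less_imp_le\<close>)
    then have "\<eta> 1 \<le> \<eta> u" by (rule tendsto_upperbound[OF lim_one]) simp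
    ultimately show ?thesis using one vanish by auto
  qed (use one vanish u in auto)
qed

lemma cutoff_profile_antimono:
  assumes \<eta>: "cutoff_profile \<eta>" and ab: "0 \<le> a" "a \<le> b"
  shows "\<eta> b \<le> \<eta> a"
proof -
  have one: "\<forall>s\<in>{0..1/2}. \<eta> s = 1"
    and decreasing: "\<forall>s1 s2. 1/2 < s1 \<and> s1 < s2 \<and> s2 < 1 \<longrightarrow> \<eta> s2 < \<eta> s1"
    and vanish: "\<forall>s\<ge>1. \<eta> s = 0"
    using \<eta> unfolding cutoff_profile_def by blast+
  have bounds: "\<eta> b \<le> 1" "0 \<le> \<eta> a" using cutoff_profile_bounds[OF \<eta>] ab by auto
  consider "a \<le> 1/2" | "1 \<le> b" | "a = b" | "1/2 < a" "a < b" "b < 1" using ab by linarith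
  then show ?thesis
    by cases (use bounds one vanish decreasing ab in \<open>auto intro: less_imp_le\<close>)
qed

section \<open>Averaging the cut-off over scales\<close>

lemma eta_star_ratio_powr_le:
  assumes \<eta>: "cutoff_profile \<eta>" and q: "0 < q" and s: "0 < s" and r: "0 < r" "r \<le> R"
  shows "eta_star \<eta> (s / r) powr q \<le> indicator {s..2 * s} r * \<eta> (s / R) powr q"
proof -
  have vanish: "\<forall>v\<ge>1. \<eta> v = 0" using \<eta> unfolding cutoff_profile_def by blast
  consider "r < s" | "2 * s < r" | "r \<in> {s..2 * s}" by force
  then show ?thesis
  proof cases
    case 1
    then have "1 < s / r" using r by (simp add: field_simps)
    then show ?thesis using vanish by (simp add: eta_star_def)
  next
    case 2
    then have "s / r < 1 / 2" using r s by (simp add: field_simps)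
    then show ?thesis by (simp add: eta_star_def)
  next
    case 3
    have "s / R \<le> s / r" using r s by (intro divide_left_mono) auto
    then have "\<eta> (s / r) \<le> \<eta> (s / R)" using cutoff_profile_antimono[OF \<eta>] r s by simp
    moreover have "0 \<le> eta_star \<eta> (s / r)" "eta_star \<eta> (s / r) \<le> \<eta> (s / r)"
      using cutoff_profile_bounds[OF \<eta>, of "s / r"] r s by (auto simp: eta_star_def)
    ultimately show ?thesis using 3 q by (simp add: powr_mono2)
  qed
qed

lemma has_integral_inverse_doubling:
  fixes s :: real
  assumes "0 < s"
  shows "((\<lambda>r. 1 / r) has_integral ln 2) {s..2 * s}"
proof -
  have "((\<lambda>r. 1 / r) has_integral (ln (2 * s) - ln s)) {s..2 * s}"
  proof (rule fundamental_theorem_of_calculus)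
    show "s \<le> 2 * s" using assms by simp
    show "(ln has_vector_derivative 1 / x) (at x within {s..2 * s})" if "x \<in> {s..2 * s}" for x
      using that assms by (auto intro!: has_field_derivative_at_within DERIV_ln_divide
          simp: has_real_derivative_iff_has_vector_derivative[symmetric])
  qed
  then show ?thesis using assms by (simp add: ln_mult)
qed

lemma nn_integral_eta_star_ratio_le:
  assumes \<eta>: "cutoff_profile \<eta>" and q: "0 < q" and s: "0 < s" and a: "0 < a"
  shows "(\<integral>\<^sup>+ r. ennreal (indicator {a..b} r * (eta_star \<eta> (s / r) powr q / r)) \<partial>lborel)
           \<le> ennreal (ln 2 * \<eta> (s / b) powr q)"
proof -
  have "(\<integral>\<^sup>+ r. ennreal (indicator {a..b} r * (eta_star \<eta> (s / r) powr q / r)) \<partial>lborel)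
      \<le> (\<integral>\<^sup>+ r. ennreal (\<eta> (s / b) powr q) * ennreal (indicator {s..2 * s} r * (1 / r)) \<partial>lborel)"
  proof (intro nn_integral_mono)
    fix r
    show "ennreal (indicator {a..b} r * (eta_star \<eta> (s / r) powr q / r))
        \<le> ennreal (\<eta> (s / b) powr q) * ennreal (indicator {s..2 * s} r * (1 / r))"
    proof (cases "r \<in> {a..b}")
      case True
      then have r: "0 < r" "r \<le> b" using a by auto
      have "eta_star \<eta> (s / r) powr q / r \<le> indicator {s..2 * s} r * \<eta> (s / b) powr q / r"
        using eta_star_ratio_powr_le[OF \<eta> q s r] r by (simp add: divide_right_mono)
      then show ?thesis
        using True r by (simp add: ennreal_mult[symmetric] ennreal_leI mult.commute)
    qed simp
  qed
  also have "\<dots> = ennreal (\<eta> (s / b) powr q) * (\<integral>\<^sup>+ r. ennreal (indicator {s..2 * s} r * (1 / r)) \<partial>lborel)"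
    by (intro nn_integral_cmult) measurable
  also have "(\<integral>\<^sup>+ r. ennreal (indicator {s..2 * s} r * (1 / r)) \<partial>lborel) = ennreal (ln 2)"
    using s by (intro nn_integral_has_integral_lebesgue has_integral_inverse_doubling) auto
  finally show ?thesis by (simp add: ennreal_mult mult.commute)
qed

lemma integral_integral_le_of_nn_integral_le:
  fixes k :: "real \<Rightarrow> 'a::euclidean_space \<Rightarrow> real" and c :: "'a \<Rightarrow> real"
  assumes k_meas: "case_prod k \<in> borel_measurable (lborel \<Otimes>\<^sub>M lborel)"
    and k_nonneg: "\<And>r z. 0 \<le> k r z" and k_int: "\<And>r. integrable lborel (k r)"
    and c_int: "integrable lborel c" and c_nonneg: "\<And>z. 0 \<le> c z"
    and k_bound: "\<And>z. (\<integral>\<^sup>+ r. ennreal (k r z) \<partial>lborel) \<le> ennreal (c z)"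
  shows "integrable lborel (\<lambda>r. \<integral>z. k r z \<partial>lborel)
    \<and> (\<integral>r. (\<integral>z. k r z \<partial>lborel) \<partial>lborel) \<le> (\<integral>z. c z \<partial>lborel)"
proof -
  define g where "g r = (\<integral>z. k r z \<partial>lborel)" for r
  have g_nonneg: "0 \<le> g r" for r unfolding g_def by (intro integral_nonneg_AE) (simp add: k_nonneg)
  have g_nn: "ennreal (g r) = (\<integral>\<^sup>+ z. ennreal (k r z) \<partial>lborel)" for r
    unfolding g_def using k_int k_nonneg by (simp add: nn_integral_eq_integral)
  have g_meas: "g \<in> borel_measurable lborel"
  proof -
    have "g = (\<lambda>r. enn2real (\<integral>\<^sup>+ z. ennreal (k r z) \<partial>lborel))"
      using g_nn g_nonneg by (simp add: fun_eq_iff flip: g_nn)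
    then show ?thesis
      using lborel.borel_measurable_nn_integral[of "\<lambda>r z. ennreal (k r z)"] k_meas by simp
  qed
  have "(\<integral>\<^sup>+ r. ennreal (g r) \<partial>lborel) = (\<integral>\<^sup>+ r. (\<integral>\<^sup>+ z. ennreal (k r z) \<partial>lborel) \<partial>lborel)"
    by (simp add: g_nn)
  also have "\<dots> = (\<integral>\<^sup>+ z. (\<integral>\<^sup>+ r. ennreal (k r z) \<partial>lborel) \<partial>lborel)"
    using measurable_compose[OF k_meas measurable_ennreal]
    by (intro lborel_pair.Fubini'[symmetric]) (simp add: case_prod_unfold)
  also have "\<dots> \<le> (\<integral>\<^sup>+ z. ennreal (c z) \<partial>lborel)"
    by (intro nn_integral_mono k_bound)
  also have "\<dots> = ennreal (\<integral>z. c z \<partial>lborel)"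
    using c_int c_nonneg by (simp add: nn_integral_eq_integral)
  finally have g_bound: "(\<integral>\<^sup>+ r. ennreal (g r) \<partial>lborel) \<le> ennreal (\<integral>z. c z \<partial>lborel)" .
  have g_int: "integrable lborel g"
    using g_bound g_nonneg g_meas by (intro integrableI_bounded) (auto simp: top_unique intro: le_less_trans)
  have "(\<integral>r. g r \<partial>lborel) = enn2real (\<integral>\<^sup>+ r. ennreal (g r) \<partial>lborel)"
    using g_meas by (intro integral_eq_nn_integral) (auto simp: g_nonneg)
  also have "\<dots> \<le> (\<integral>z. c z \<partial>lborel)"
    using g_bound c_nonneg by (simp add: enn2real_leI integral_nonneg_AE)
  finally show ?thesis using g_int unfolding g_def[abs_def] by simp
qed

lemma integral_eta_star_average_le:
  fixes u s :: "'a::euclidean_space \<Rightarrow> real"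
  assumes \<eta>: "cutoff_profile \<eta>" and q: "0 < q" and a: "0 < a" "a \<le> b"
    and u_int: "integrable lborel u" and u_nonneg: "\<And>z. 0 \<le> u z"
    and s_meas: "s \<in> borel_measurable borel" and s_pos: "\<And>z. u z \<noteq> 0 \<Longrightarrow> 0 < s z"
  shows "(\<lambda>r. (\<integral>z. u z * eta_star \<eta> (max (s z / r) 0) powr q \<partial>lborel) / r) integrable_on {a..b}
    \<and> integral {a..b} (\<lambda>r. (\<integral>z. u z * eta_star \<eta> (max (s z / r) 0) powr q \<partial>lborel) / r)
        \<le> ln 2 * (\<integral>z. u z * \<eta> (max (s z / b) 0) powr q \<partial>lborel)"
proof -
  \<comment> \<open>Truncating the argument at 0 keeps it where \<eta> is continuous, so the integrands are Borel.\<close>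
  define E where "E v = \<eta> (max v 0)" for v
  define Es where "Es v = (if max v 0 < 1/2 then 0 else E v)" for v
  have Es_eq: "eta_star \<eta> (max v 0) = Es v" for v by (simp add: Es_def E_def eta_star_def max_def)
  have E_meas[measurable]: "E \<in> borel_measurable borel"
    unfolding E_def
    by (intro borel_measurable_continuous_onI continuous_on_compose2[OF cutoff_profile_continuous[OF \<eta>]])
      (auto intro!: continuous_intros)
  have Es_meas[measurable]: "Es \<in> borel_measurable borel" unfolding Es_def by measurable
  have [measurable]: "u \<in> borel_measurable lborel" "s \<in> borel_measurable lborel"
    using u_int s_meas by auto
  have E_bounds: "0 \<le> E v \<and> E v \<le> 1" for v unfolding E_def using cutoff_profile_bounds[OF \<eta>] by simp
  have Es_bounds: "0 \<le> Es v \<and> Es v \<le> 1" for v using E_bounds[of v] unfolding Es_def by auto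
  have cut_int: "integrable lborel (\<lambda>z. u z * F (s z / r) powr q)"
    if "F \<in> borel_measurable borel" "\<And>v. 0 \<le> F v \<and> F v \<le> 1" for F r
    using that q
    by (intro Bochner_Integration.integrable_bound[OF u_int])
      (auto simp: abs_mult u_nonneg intro!: AE_I2 mult_left_le powr_le1)
  define G where "G r = (\<integral>z. u z * Es (s z / r) powr q \<partial>lborel)" for r
  define k where "k r z = indicator {a..b} r * (u z * Es (s z / r) powr q / r)" for r z
  have k_integral: "(\<integral>z. k r z \<partial>lborel) = indicator {a..b} r * (G r / r)" for r
    by (simp add: k_def G_def)
  have k_bound: "(\<integral>\<^sup>+ r. ennreal (k r z) \<partial>lborel) \<le> ennreal (ln 2 * (u z * E (s z / b) powr q))" for z
  proof (cases "u z = 0")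
    case False
    have sz: "0 < s z" by (rule s_pos[OF False])
    have "(\<integral>\<^sup>+ r. ennreal (k r z) \<partial>lborel)
        = ennreal (u z) * (\<integral>\<^sup>+ r. ennreal (indicator {a..b} r * (Es (s z / r) powr q / r)) \<partial>lborel)"
      unfolding k_def using u_nonneg[of z]
      by (subst nn_integral_cmult[symmetric], measurable)
        (intro nn_integral_cong, simp add: ennreal_mult'[symmetric] mult_ac)
    also have "(\<integral>\<^sup>+ r. ennreal (indicator {a..b} r * (Es (s z / r) powr q / r)) \<partial>lborel)
        = (\<integral>\<^sup>+ r. ennreal (indicator {a..b} r * (eta_star \<eta> (s z / r) powr q / r)) \<partial>lborel)"
      unfolding Es_eq[symmetric] using a sz by (intro nn_integral_cong) (auto simp: indicator_def)
    also have "ennreal (u z) * \<dots> \<le> ennreal (u z) * ennreal (ln 2 * \<eta> (s z / b) powr q)"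
      by (intro mult_left_mono nn_integral_eta_star_ratio_le[OF \<eta> q sz a(1)]) simp
    also have "\<dots> = ennreal (ln 2 * (u z * E (s z / b) powr q))"
      using sz a u_nonneg[of z] by (simp add: E_def ennreal_mult[symmetric] mult_ac)
    finally show ?thesis .
  qed (simp add: k_def)
  have "integrable lborel (\<lambda>r. \<integral>z. k r z \<partial>lborel)
      \<and> (\<integral>r. (\<integral>z. k r z \<partial>lborel) \<partial>lborel) \<le> (\<integral>z. ln 2 * (u z * E (s z / b) powr q) \<partial>lborel)"
  proof (rule integral_integral_le_of_nn_integral_le[OF _ _ _ _ _ k_bound])
    show "case_prod k \<in> borel_measurable (lborel \<Otimes>\<^sub>M lborel)" unfolding k_def by measurable
    show "0 \<le> k r z" for r z using a u_nonneg[of z] by (simp add: k_def indicator_def)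
    show "integrable lborel (k r)" for r
      unfolding k_def by (intro integrable_mult_right integrable_divide cut_int Es_bounds) simp
    show "integrable lborel (\<lambda>z. ln 2 * (u z * E (s z / b) powr q))"
      by (intro integrable_mult_right cut_int E_bounds) simp
  qed (simp add: u_nonneg)
  then have "set_integrable lborel {a..b} (\<lambda>r. G r / r)
      \<and> (LINT r : {a..b} | lborel. G r / r) \<le> ln 2 * (\<integral>z. u z * E (s z / b) powr q \<partial>lborel)"
    by (simp add: k_integral set_integrable_def set_lebesgue_integral_def)
  then show ?thesis
    using set_borel_integral_eq_integral[of "{a..b}" "\<lambda>r. G r / r"]
    unfolding Es_eq G_def E_def by simp
qed

section \<open>A Bihari-type integral inequality\<close>

lemma powr_growth_separation:
  fixes U U' H h :: "real \<Rightarrow> real"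
  assumes p: "p > 1" and ab: "a \<le> b"
    and U_cont: "continuous_on {a..b} U" and H_cont: "continuous_on {a..b} H"
    and U_pos: "\<And>x. x \<in> {a..b} \<Longrightarrow> 0 < U x"
    and U_deriv: "\<And>x. x \<in> {a<..<b} \<Longrightarrow> (U has_real_derivative U' x) (at x)"
    and H_deriv: "\<And>x. x \<in> {a<..<b} \<Longrightarrow> (H has_real_derivative h x) (at x)"
    and growth: "\<And>x. x \<in> {a<..<b} \<Longrightarrow> h x * U x powr p \<le> U' x"
  shows "H b - H a \<le> U a powr (1 - p) / (p - 1)"
proof -
  define \<Psi> where "\<Psi> x = - (U x powr (1 - p) / (p - 1)) - H x" for x
  have "\<Psi> a \<le> \<Psi> b"
  proof (rule DERIV_nonneg_imp_increasing_open[OF ab])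
    fix x assume "a < x" "x < b"
    then have x: "x \<in> {a<..<b}" "x \<in> {a..b}" by auto
    have pos: "0 < U x" by (rule U_pos[OF x(2)])
    have "((\<lambda>x. U x powr (1 - p)) has_real_derivative (1 - p) * U x powr (- p) * U' x) (at x)"
      using DERIV_fun_powr[OF U_deriv[OF x(1)] pos, of "1 - p"] by simp
    then have "(\<Psi> has_real_derivative - ((1 - p) * U x powr (- p) * U' x / (p - 1)) - h x) (at x)"
      unfolding \<Psi>_def by (intro DERIV_diff DERIV_minus DERIV_cdivide H_deriv[OF x(1)])
    moreover have "- ((1 - p) * U x powr (- p) * U' x / (p - 1)) - h x = U x powr (- p) * U' x - h x"
      using p by (simp add: field_simps)
    moreover have "h x \<le> U x powr (- p) * U' x"
    proof -
      have "h x = U x powr (- p) * (h x * U x powr p)"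
        using pos by (simp add: powr_minus field_simps)
      also have "\<dots> \<le> U x powr (- p) * U' x"
        by (intro mult_left_mono growth[OF x(1)]) simp
      finally show ?thesis .
    qed
    ultimately show "\<exists>y. (\<Psi> has_real_derivative y) (at x) \<and> 0 \<le> y" by auto
  next
    show "continuous_on {a..b} \<Psi>"
      unfolding \<Psi>_def using U_pos p
      by (intro continuous_intros U_cont H_cont) (auto simp: less_imp_neq[symmetric])
  qed
  moreover have "0 \<le> U b powr (1 - p) / (p - 1)" using p by simp
  ultimately show ?thesis unfolding \<Psi>_def by simp
qed

lemma integral_inequality_powr_bound:
  fixes g h H :: "real \<Rightarrow> real"
  assumes p: "p > 1" and \<delta>: "\<delta> > 0" and ab: "a \<le> b"
    and g_int: "g integrable_on {a..b}"
    and h_cont: "continuous_on {a..b} h" and h_nonneg: "\<And>x. x \<in> {a..b} \<Longrightarrow> 0 \<le> h x"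
    and H_cont: "continuous_on {a..b} H"
    and H_deriv: "\<And>x. x \<in> {a<..<b} \<Longrightarrow> (H has_real_derivative h x) (at x)"
    and ineq: "\<And>r. r \<in> {a..b} \<Longrightarrow> h r * (\<delta> + integral {a..r} g) powr p \<le> g r"
  shows "H b - H a \<le> \<delta> powr (1 - p) / (p - 1)"
proof -
  define Y where "Y r = integral {a..r} g" for r
  have g_sub: "r \<in> {a..b} \<Longrightarrow> g integrable_on {a..r}" for r
    by (rule integrable_on_subinterval[OF g_int]) auto
  have g_nonneg: "r \<in> {a..b} \<Longrightarrow> 0 \<le> g r" for r
    using ineq[of r] h_nonneg[of r] by (smt (verit) mult_nonneg_nonneg powr_ge_zero)
  have Y_nonneg: "r \<in> {a..b} \<Longrightarrow> 0 \<le> Y r" for r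
    unfolding Y_def by (rule integral_nonneg[OF g_sub]) (auto intro!: g_nonneg)
  \<comment> \<open>Y need not be differentiable, so compare with the C1 function W below, which stays below Y.\<close>
  define f where "f r = h r * (\<delta> + Y r) powr p" for r
  have f_cont: "continuous_on {a..b} f"
    unfolding f_def Y_def using Y_nonneg \<delta>
    by (intro continuous_intros h_cont indefinite_integral_continuous_1[OF g_int])
      (auto simp: Y_def less_imp_neq[symmetric] add_pos_nonneg)
  have f_nonneg: "r \<in> {a..b} \<Longrightarrow> 0 \<le> f r" for r
    unfolding f_def using h_nonneg by simp
  define W where "W r = integral {a..r} f" for r
  have f_int: "f integrable_on {a..b}" by (rule integrable_continuous_interval[OF f_cont])
  have f_sub: "r \<in> {a..b} \<Longrightarrow> f integrable_on {a..r}" for r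
    by (rule integrable_on_subinterval[OF f_int]) auto
  have W_nonneg: "r \<in> {a..b} \<Longrightarrow> 0 \<le> W r" for r
    unfolding W_def by (rule integral_nonneg[OF f_sub]) (auto intro!: f_nonneg)
  have W_le_Y: "r \<in> {a..b} \<Longrightarrow> W r \<le> Y r" for r
    unfolding W_def Y_def using ineq by (intro integral_le f_sub g_sub) (auto simp: f_def Y_def)
  have W_deriv: "x \<in> {a<..<b} \<Longrightarrow> (W has_real_derivative f x) (at x)" for x
    using integral_has_real_derivative[OF f_cont, of x] at_within_interior[of x "{a..b}"]
    unfolding W_def by auto
  have "H b - H a \<le> (\<delta> + W a) powr (1 - p) / (p - 1)"
  proof (rule powr_growth_separation[OF p ab _ H_cont _ _ H_deriv])
    show "continuous_on {a..b} (\<lambda>x. \<delta> + W x)"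
      unfolding W_def by (intro continuous_intros indefinite_integral_continuous_1[OF f_int])
    show "\<And>x. x \<in> {a..b} \<Longrightarrow> 0 < \<delta> + W x" using W_nonneg \<delta> by (simp add: add_pos_nonneg)
    show "\<And>x. x \<in> {a<..<b} \<Longrightarrow> ((\<lambda>x. \<delta> + W x) has_real_derivative f x) (at x)"
      using W_deriv by (auto intro!: derivative_eq_intros)
    show "h x * (\<delta> + W x) powr p \<le> f x" if "x \<in> {a<..<b}" for x
      unfolding f_def using that p \<delta> W_nonneg W_le_Y h_nonneg
      by (intro mult_left_mono powr_mono2) (auto simp: add_pos_nonneg)
  qed
  then show ?thesis by (simp add: W_def)
qed

lemma has_real_derivative_powr_primitive:
  assumes x: "0 < x"
  shows "((\<lambda>x. if k = 0 then ln x else x powr k / k) has_real_derivative x powr (k - 1)) (at x)"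
proof (cases "k = 0")
  case True
  then show ?thesis using DERIV_ln_divide[OF x] x by (simp add: powr_minus_divide)
next
  case False
  then show ?thesis using DERIV_cdivide[OF has_real_derivative_powr[OF x], of k k] by simp
qed

definition lifespan_bound :: "real \<Rightarrow> real \<Rightarrow> real \<Rightarrow> real \<Rightarrow> real \<Rightarrow> real" where
  "lifespan_bound p \<theta> \<delta> C0 R1 =
     (if \<theta> > 0
      then (R1 powr ((p - 1) * \<theta>) + ln 2 * C0 powr p * \<theta> * \<delta> powr (- (p - 1)))
             powr (1 / ((p - 1) * \<theta>))
      else exp (ln R1 + ln 2 * (1 / (p - 1)) * C0 powr p * \<delta> powr (- (p - 1))))"

lemma le_lifespan_bound:
  fixes g :: "real \<Rightarrow> real"
  assumes p: "p > 1" and \<delta>: "\<delta> > 0" and C0: "C0 > 0" and \<theta>: "\<theta> \<ge> 0"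
    and R1: "0 < R1" "R1 \<le> R" and g_int: "g integrable_on {R1..R}"
    and ineq: "\<And>r. r \<in> {R1..R} \<Longrightarrow>
       C0 powr (- p) * r powr (\<theta> * (p - 1) - 1) * (\<delta> + integral {R1..r} g / ln 2) powr p \<le> g r"
  shows "R \<le> lifespan_bound p \<theta> \<delta> C0 R1"
proof -
  define k where "k = \<theta> * (p - 1)"
  define c where "c = C0 powr (- p) / ln 2"
  define L where "L x = (if k = 0 then ln x else x powr k / k)" for x
  have L_deriv: "(L has_real_derivative x powr (k - 1)) (at x)" if "0 < x" for x
    unfolding L_def by (rule has_real_derivative_powr_primitive[OF that])
  have L_cont: "continuous_on {R1..R} L"
    using R1 by (intro continuous_at_imp_continuous_on ballI DERIV_isCont[OF L_deriv]) auto
  have "c * L R - c * L R1 \<le> \<delta> powr (1 - p) / (p - 1)"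
  proof (rule integral_inequality_powr_bound[OF p \<delta> R1(2) integrable_on_divide[OF g_int, of "ln 2"]])
    show "continuous_on {R1..R} (\<lambda>r. c * r powr (k - 1))"
      using R1 by (auto intro!: continuous_intros)
    show "continuous_on {R1..R} (\<lambda>r. c * L r)" by (intro continuous_intros L_cont)
    show "((\<lambda>r. c * L r) has_real_derivative c * x powr (k - 1)) (at x)" if "x \<in> {R1<..<R}" for x
      using that R1 by (intro DERIV_cmult L_deriv) auto
    show "c * r powr (k - 1) * (\<delta> + integral {R1..r} (\<lambda>r. g r / ln 2)) powr p \<le> g r / ln 2"
      if "r \<in> {R1..R}" for r
      using ineq[OF that] by (simp add: c_def k_def divide_right_mono)
  qed (use C0 in \<open>simp add: c_def\<close>)
  then have L_bound: "L R - L R1 \<le> ln 2 * C0 powr p * \<delta> powr (- (p - 1)) / (p - 1)"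
    using C0 p by (simp add: c_def powr_minus field_simps)
  show ?thesis
  proof (cases "\<theta> > 0")
    case True
    then have k: "0 < k" "(p - 1) * \<theta> = k" using p by (simp_all add: k_def)
    have "R powr k - R1 powr k \<le> k * (ln 2 * C0 powr p * \<delta> powr (- (p - 1)) / (p - 1))"
      using L_bound k by (simp add: L_def diff_divide_distrib[symmetric] divide_le_eq mult.commute)
    also have "\<dots> = ln 2 * C0 powr p * \<theta> * \<delta> powr (- (p - 1))"
      using p by (simp add: k_def)
    finally have "R powr k \<le> R1 powr k + ln 2 * C0 powr p * \<theta> * \<delta> powr (- (p - 1))"
      by simp
    then have "(R powr k) powr (1 / k) \<le> lifespan_bound p \<theta> \<delta> C0 R1"
      unfolding lifespan_bound_def using True k by (simp add: powr_mono2)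
    then show ?thesis using k R1 by (simp add: powr_powr)
  next
    case False
    then have "ln R \<le> ln R1 + ln 2 * (1 / (p - 1)) * C0 powr p * \<delta> powr (- (p - 1))"
      using L_bound \<theta> by (simp add: L_def k_def)
    then have "exp (ln R) \<le> exp (ln R1 + ln 2 * (1 / (p - 1)) * C0 powr p * \<delta> powr (- (p - 1)))"
      by simp
    then show ?thesis using False R1 unfolding lifespan_bound_def by simp
  qed
qed

lemma set_integral_PR_nonneg:
  fixes C :: "(real^'n) set" and w \<psi> :: "real^'n \<Rightarrow> real \<Rightarrow> real"
  assumes w_nonneg: "\<forall>x\<in>C. \<forall>t\<in>{0..<T}. w x t \<ge> 0" and r: "r < T"
    and \<psi>_nonneg: "\<And>x t. 0 \<le> \<psi> x t"
  shows "0 \<le> (LINT z : PR C \<alpha> r | lborel. w (fst z) (snd z) * \<psi> (fst z) (snd z))"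
  unfolding set_lebesgue_integral_def
proof (intro integral_nonneg_AE AE_I2)
  fix z :: "(real^'n) \<times> real"
  obtain x t where z: "z = (x, t)" by (cases z)
  show "0 \<le> indicator (PR C \<alpha> r) z *\<^sub>R (w (fst z) (snd z) * \<psi> (fst z) (snd z))"
  proof (cases "z \<in> PR C \<alpha> r")
    case True
    then have "x \<in> C" "0 \<le> t" "jbr x powr (2 - \<alpha>) + t \<le> r" by (auto simp: PR_def z)
    moreover have "0 \<le> jbr x powr (2 - \<alpha>)" by simp
    ultimately have "t < T" using r by linarith
    then have "0 \<le> w x t" using w_nonneg \<open>x \<in> C\<close> \<open>0 \<le> t\<close> by auto
    then show ?thesis using \<psi>_nonneg by (simp add: z)
  qed simp
qed

lemma set_integral_PR_eq_integral_cutoff: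
  fixes C :: "(real^'n) set" and w :: "real^'n \<Rightarrow> real \<Rightarrow> real" and \<phi> :: "real \<Rightarrow> real"
  assumes \<phi>: "\<forall>v\<ge>1. \<phi> v = 0" and r: "0 < r" "r \<le> R" and q: "q > 0"
  shows "(LINT z : PR C \<alpha> r | lborel. w (fst z) (snd z) * \<phi> (sR \<alpha> r (fst z) (snd z)) powr q)
    = (\<integral>z. indicator (C \<times> {0..R}) z * w (fst z) (snd z) *
          \<phi> (max ((jbr (fst z) powr (2 - \<alpha>) + snd z) / r) 0) powr q \<partial>lborel)"
  unfolding set_lebesgue_integral_def
proof (intro Bochner_Integration.integral_cong refl)
  fix z :: "(real^'n) \<times> real"
  obtain x t where z: "z = (x, t)" by (cases z)
  have j0: "0 \<le> jbr x powr (2 - \<alpha>)" by simp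
  show "indicator (PR C \<alpha> r) z *\<^sub>R (w (fst z) (snd z) * \<phi> (sR \<alpha> r (fst z) (snd z)) powr q)
    = indicator (C \<times> {0..R}) z * w (fst z) (snd z) *
          \<phi> (max ((jbr (fst z) powr (2 - \<alpha>) + snd z) / r) 0) powr q"
  proof (cases "z \<in> PR C \<alpha> r")
    case True
    then have h: "x \<in> C" "0 \<le> t" "jbr x powr (2 - \<alpha>) + t \<le> r" by (auto simp: PR_def z)
    moreover have "t \<le> R" using h(3) j0 r(2) by linarith
    ultimately have "z \<in> C \<times> {0..R}" by (simp add: z)
    moreover have "max ((jbr x powr (2 - \<alpha>) + t) / r) 0 = (jbr x powr (2 - \<alpha>) + t) / r"
      using h j0 r by simp
    ultimately show ?thesis using True by (simp add: z sR_def)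
  next
    case False
    show ?thesis
    proof (cases "z \<in> C \<times> {0..R}")
      case True
      then have "x \<in> C" "0 \<le> t" by (auto simp: z)
      then have "r < jbr x powr (2 - \<alpha>) + t" using False by (auto simp: PR_def z)
      then have "1 \<le> (jbr x powr (2 - \<alpha>) + t) / r" using r by simp
      then show ?thesis using False q \<phi> by (simp add: z)
    qed (use False in simp)
  qed
qed

lemma integral_psiR_star_average_le:
  fixes C :: "(real^'n) set" and w :: "real^'n \<Rightarrow> real \<Rightarrow> real"
  assumes \<eta>: "cutoff_profile \<eta>" and p: "p > 1" and R: "0 < R1" "R1 \<le> R" "R < T"
    and w_nonneg: "\<forall>x\<in>C. \<forall>t\<in>{0..<T}. w x t \<ge> 0"
    and w_loc: "\<forall>T'\<in>{0..<T}. set_integrable lborel (C \<times> {0..T'}) (\<lambda>(x, t). w x t)"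
  shows "(\<lambda>r. (LINT z : PR C \<alpha> r | lborel. w (fst z) (snd z) * psiR_star \<eta> p \<alpha> r (fst z) (snd z)) / r)
           integrable_on {R1..R}
    \<and> integral {R1..R}
        (\<lambda>r. (LINT z : PR C \<alpha> r | lborel. w (fst z) (snd z) * psiR_star \<eta> p \<alpha> r (fst z) (snd z)) / r)
      \<le> ln 2 * (LINT z : PR C \<alpha> R | lborel. w (fst z) (snd z) * psiR \<eta> p \<alpha> R (fst z) (snd z))"
proof -
  define q where "q = 2 * conj_exp p"
  have q: "0 < q" using p by (simp add: q_def conj_exp_def)
  define u where "u z = indicator (C \<times> {0..R}) z * w (fst z) (snd z)" for z :: "(real^'n) \<times> real"
  define s where "s z = jbr (fst z) powr (2 - \<alpha>) + snd z" for z :: "(real^'n) \<times> real"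
  have jbr_pos: "0 < jbr x" for x :: "real^'n" unfolding jbr_def by (simp add: add_pos_nonneg)
  have u_int: "integrable lborel u"
    using w_loc R unfolding set_integrable_def u_def by (auto simp: case_prod_beta)
  have u_nonneg: "0 \<le> u z" for z
    using w_nonneg R unfolding u_def by (auto simp: indicator_def)
  have s_meas: "s \<in> borel_measurable borel"
  proof (rule borel_measurable_continuous_onI)
    show "continuous_on UNIV s"
      unfolding s_def using jbr_pos unfolding jbr_def
      by (intro continuous_intros) (auto simp: less_imp_neq[symmetric])
  qed
  have s_pos: "0 < s z" if "u z \<noteq> 0" for z
    using that jbr_pos[of "fst z"] by (auto simp: s_def u_def indicator_def add_pos_nonneg)
  have vanish: "\<forall>v\<ge>1. \<eta> v = 0" "\<forall>v\<ge>1. eta_star \<eta> v = 0"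
    using \<eta> unfolding cutoff_profile_def eta_star_def by auto
  have "(LINT z : PR C \<alpha> r | lborel. w (fst z) (snd z) * psiR_star \<eta> p \<alpha> r (fst z) (snd z))
      = (\<integral>z. u z * eta_star \<eta> (max (s z / r) 0) powr q \<partial>lborel)" if "r \<in> {R1..R}" for r
    unfolding psiR_star_def q_def[symmetric] u_def s_def
    using set_integral_PR_eq_integral_cutoff[OF vanish(2), of r R q C \<alpha> w] that R q by simp
  moreover have "(LINT z : PR C \<alpha> R | lborel. w (fst z) (snd z) * psiR \<eta> p \<alpha> R (fst z) (snd z))
      = (\<integral>z. u z * \<eta> (max (s z / R) 0) powr q \<partial>lborel)"
    unfolding psiR_def q_def[symmetric] u_def s_def
    using set_integral_PR_eq_integral_cutoff[OF vanish(1), of R R q C \<alpha> w] R q by simp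
  ultimately show ?thesis
    using integral_eta_star_average_le[OF \<eta> q R(1,2) u_int u_nonneg s_meas s_pos]
    by (metis (no_types, lifting) integrable_eq integral_cong)
qed

lemma root_bound_imp_powr_bound:
  assumes p: "p > 1" and C0: "C0 > 0" and r: "r > 0" and G: "0 \<le> G" and A: "0 \<le> A"
    and bound: "A \<le> C0 * r powr (- \<theta> / conj_exp p) * G powr (1 / p)"
  shows "C0 powr (- p) * r powr (\<theta> * (p - 1) - 1) * A powr p \<le> G / r"
proof -
  have "A powr p \<le> (C0 * r powr (- \<theta> / conj_exp p) * G powr (1 / p)) powr p"
    using A bound p by (intro powr_mono2) auto
  also have "\<dots> = C0 powr p * r powr (- \<theta> / conj_exp p * p) * G"
    using C0 r G p by (simp add: powr_mult powr_powr)
  also have "- \<theta> / conj_exp p * p = - \<theta> * (p - 1)"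
    using p by (simp add: conj_exp_def)
  finally have "C0 powr (- p) * r powr (\<theta> * (p - 1) - 1) * A powr p
      \<le> C0 powr (- p) * r powr (\<theta> * (p - 1) - 1) * (C0 powr p * r powr (- \<theta> * (p - 1)) * G)"
    by (intro mult_left_mono) auto
  also have "\<dots> = (C0 powr (- p) * C0 powr p) * (r powr (\<theta> * (p - 1) - 1) * r powr (- \<theta> * (p - 1))) * G"
    by (simp only: ac_simps)
  also have "\<dots> = G / r"
  proof -
    have "C0 powr (- p) * C0 powr p = 1" using C0 by (simp add: powr_add[symmetric])
    moreover have "r powr (\<theta> * (p - 1) - 1) * r powr (- \<theta> * (p - 1)) = r powr (- 1)"
      by (subst powr_add[symmetric]) simp
    ultimately show ?thesis using r by (simp add: powr_minus_divide)
  qed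
  finally show ?thesis .
qed

theorem lemma3p13:
  fixes C :: "(real^'n) set" and \<eta> :: "real \<Rightarrow> real" and w :: "real^'n \<Rightarrow> real \<Rightarrow> real"
    and p \<alpha> \<delta> C0 R1 \<theta> T :: real
  assumes "cone_domain C" and "cutoff_profile \<eta>"
    and "p > 1" and "0 \<le> \<alpha>" and "\<alpha> \<le> 1"
    and "\<delta> > 0" and "C0 > 0" and "R1 > 0" and "\<theta> \<ge> 0" and "T > R1"
    and w_nonneg: "\<forall>x\<in>C. \<forall>t\<in>{0..<T}. w x t \<ge> 0"
    and w_loc: "\<forall>T'\<in>{0..<T}. set_integrable lborel (C \<times> {0..T'}) (\<lambda>(x, t). w x t)"
    and main: "\<forall>R\<in>{R1..<T}.
       \<delta> + (LINT z : PR C \<alpha> R | lborel. w (fst z) (snd z) * psiR \<eta> p \<alpha> R (fst z) (snd z))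
         \<le> C0 * R powr (- \<theta> / conj_exp p) *
            (LINT z : PR C \<alpha> R | lborel. w (fst z) (snd z) * psiR_star \<eta> p \<alpha> R (fst z) (snd z)) powr (1 / p)"
  shows "(\<theta> > 0 \<longrightarrow>
            T \<le> (R1 powr ((p - 1) * \<theta>) + ln 2 * C0 powr p * \<theta> * \<delta> powr (- (p - 1)))
                   powr (1 / ((p - 1) * \<theta>)))
       \<and> (\<theta> = 0 \<longrightarrow>
            T \<le> exp (ln R1 + ln 2 * (1 / (p - 1)) * C0 powr p * \<delta> powr (- (p - 1))))"
proof -
  note \<eta> = assms(2) and p = assms(3) and \<delta> = assms(6) and C0 = assms(7) and R1 = assms(8)
    and \<theta> = assms(9) and T = assms(10)
  define F where "F R = (LINT z : PR C \<alpha> R | lborel. w (fst z) (snd z) * psiR \<eta> p \<alpha> R (fst z) (snd z))" for R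
  define G where "G R = (LINT z : PR C \<alpha> R | lborel. w (fst z) (snd z) * psiR_star \<eta> p \<alpha> R (fst z) (snd z))" for R
  have average: "(\<lambda>r. G r / r) integrable_on {R1..R} \<and> integral {R1..R} (\<lambda>r. G r / r) \<le> ln 2 * F R"
    if "R1 \<le> R" "R < T" for R
    unfolding F_def G_def by (rule integral_psiR_star_average_le[OF \<eta> p R1 that w_nonneg w_loc])
  have G_nonneg: "0 \<le> G r" if "r < T" for r
    unfolding G_def psiR_star_def by (rule set_integral_PR_nonneg[OF w_nonneg that]) simp
  have growth: "C0 powr (- p) * r powr (\<theta> * (p - 1) - 1) * (\<delta> + integral {R1..r} (\<lambda>r. G r / r) / ln 2) powr p
      \<le> G r / r" if r: "R1 \<le> r" "r < T" for r
  proof (rule root_bound_imp_powr_bound[OF p C0 _ G_nonneg[OF r(2)]])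
    have "0 \<le> integral {R1..r} (\<lambda>r. G r / r)"
      using average[OF r] G_nonneg r R1 by (intro integral_nonneg) auto
    then show "0 \<le> \<delta> + integral {R1..r} (\<lambda>r. G r / r) / ln 2" using \<delta> by simp
    have "integral {R1..r} (\<lambda>r. G r / r) / ln 2 \<le> F r" using average[OF r] by (simp add: field_simps)
    moreover have "\<delta> + F r \<le> C0 * r powr (- \<theta> / conj_exp p) * G r powr (1 / p)"
      using main r unfolding F_def G_def by simp
    ultimately show "\<delta> + integral {R1..r} (\<lambda>r. G r / r) / ln 2
        \<le> C0 * r powr (- \<theta> / conj_exp p) * G r powr (1 / p)"
      by linarith
  qed (use r R1 in simp)
  have "T \<le> lifespan_bound p \<theta> \<delta> C0 R1"
  proof (rule dense_le_bounded[OF T])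
    fix R assume "R1 < R" "R < T"
    then show "R \<le> lifespan_bound p \<theta> \<delta> C0 R1"
      using average growth by (intro le_lifespan_bound[OF p \<delta> C0 \<theta> R1, where g = "\<lambda>r. G r / r"]) auto
  qed
  then show ?thesis using \<theta> by (auto simp: lifespan_bound_def)
qed

end
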